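(* Let $k$, $d$ and $n$ be positive integers such that $k \ge 6$ is even, $d \ge 2$, and $n \ge\frac{d+1}{8}(k^2-2sk+4s-4) + 1$, where $s \in \{0,1\}$ with $s \equiv \frac{k-2}{2} \pmod 2$. Then, for any function $f:[n] \rightarrow \{-1,1\}$ such that $|f([n])| \le \frac{d-1}{d+1}n$, there exists a $(d,k)$-block $A\subseteq[n]$ with $f(A)=0$.
   Context: $[n]=\{1,\dots,n\}$; $f(Y)=\sum_{y\in Y}f(y)$. A $(d,k)$-block in $[n]$ is a set $\{a_1,\dots,a_k\}\subseteq[n]$ of integers with $a_1<a_2<\dots<a_k$ and $a_{i+1}-a_i\le d$ for all $1\le i\le k-1$. *)

theory Defs
  imports Complex_Main
begin

definition dk_block :: "nat \<Rightarrow> nat \<Rightarrow> nat set \<Rightarrow> bool" where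
  "dk_block d k A \<longleftrightarrow>
     (\<exists>xs. sorted_wrt (<) xs \<and> length xs = k \<and> set xs = A \<and>
           (\<forall>i. i + 1 < k \<longrightarrow> xs ! (i + 1) - xs ! i \<le> d))"

end

theory Submission
  imports Defs
begin

text \<open>
  Call a set of integers gap-closed if every element other than the maximum has a larger element
  of the set within distance d; the gap-closed k-sets are exactly the (d,k)-blocks. Write k = 2m.
  Each value of f is taken on at least n/(d+1) points. If the points of one sign are listed in
  increasing order, then unless some m consecutive ones can be joined by at most m extra points
  into a gap-closed set, the gaps between them would be too long to fit into [1..n]; the bound on
  n is exactly what this counting needs. Padding such sets yields gap-closed k-sets B and B' with
  f(B) \<le> 0 \<le> f(B'). Moving the largest element of a gap-closed k-set to a free position
  adjacent to the remaining elements keeps it gap-closed and strictly decreases its element sum, so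
  it eventually reaches {1..k}. Along the way f changes by at most 2 per move and stays even since
  k is even, so starting from whichever of B, B' has sign opposite to f({1..k}) we meet a block
  with f-sum 0.
\<close>

definition gap_closed :: "nat \<Rightarrow> nat set \<Rightarrow> bool" where
  "gap_closed d S \<longleftrightarrow> (\<forall>x\<in>S. (\<exists>y\<in>S. x < y) \<longrightarrow> (\<exists>y\<in>S. x < y \<and> y \<le> x + d))"

lemma gap_closed_imp_dk_block:
  assumes "finite S" "gap_closed d S"
  shows "dk_block d (card S) S"
proof -
  obtain xs where xs: "sorted_wrt (<) xs" "set xs = S" "length xs = card S"
    using finite_set_strict_sorted[OF assms(1)] by blast
  have "xs ! (i + 1) - xs ! i \<le> d" if i: "i + 1 < card S" for i
  proof -
    have lt: "xs ! i < xs ! (i + 1)" using sorted_wrt_nth_less[OF xs(1), of i "i + 1"] i xs(3) by simp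
    have "xs ! i \<in> S" "xs ! (i + 1) \<in> S" using i xs(2,3) nth_mem[of _ xs] by simp_all
    then obtain y where y: "y \<in> S" "xs ! i < y" "y \<le> xs ! i + d"
      using assms(2) lt unfolding gap_closed_def by blast
    then obtain j where j: "j < length xs" "xs ! j = y" using xs(2) by (metis in_set_conv_nth)
    have "\<not> j \<le> i"
    proof
      assume "j \<le> i"
      then have "xs ! j \<le> xs ! i"
        using sorted_wrt_nth_less[OF xs(1), of j i] i xs(3) by (cases "j = i") auto
      then show False using j y by simp
    qed
    then have "xs ! (i + 1) \<le> xs ! j"
      using sorted_wrt_nth_less[OF xs(1), of "i + 1" j] j by (cases "i + 1 = j") auto
    then show ?thesis using j y by simp
  qed
  then show ?thesis unfolding dk_block_def using xs by blast
qed

lemma gap_closed_Un: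
  assumes "gap_closed d S" "gap_closed d T" "a \<in> S" "a \<in> T"
    and "\<forall>x\<in>S. x \<le> a" "\<forall>y\<in>T. a \<le> y"
  shows "gap_closed d (S \<union> T)"
  unfolding gap_closed_def
proof (intro ballI impI)
  fix x assume x: "x \<in> S \<union> T" and bigger: "\<exists>y\<in>S \<union> T. x < y"
  show "\<exists>y\<in>S \<union> T. x < y \<and> y \<le> x + d"
  proof (cases "x \<in> T")
    case True
    then have "\<exists>y\<in>T. x < y" using bigger assms(5,6) by force
    then show ?thesis using assms(2) True unfolding gap_closed_def by blast
  next
    case False
    then have "x \<in> S" "x < a" using x assms(4,5) by (auto simp: order.order_iff_strict)
    then show ?thesis using assms(1,3) unfolding gap_closed_def by blast
  qed
qed

lemma gap_closed_Diff_Max: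
  assumes "finite S" "gap_closed d S"
  shows "gap_closed d (S - {Max S})"
  unfolding gap_closed_def
proof (intro ballI impI)
  fix x assume x: "x \<in> S - {Max S}" and "\<exists>y\<in>S - {Max S}. x < y"
  then obtain z where z: "z \<in> S - {Max S}" "x < z" by blast
  obtain y where y: "y \<in> S" "x < y" "y \<le> x + d"
    using assms(2) x z unfolding gap_closed_def by blast
  show "\<exists>y\<in>S - {Max S}. x < y \<and> y \<le> x + d"
  proof (cases "y = Max S")
    case True
    have "z \<le> Max S" using z assms(1) by simp
    then show ?thesis using z y True by (intro bexI[of _ z]) auto
  qed (use y in auto)
qed

lemma gap_closed_insert_adjacent:
  assumes "gap_closed d S" "d \<ge> 1" "Suc c \<in> S \<or> c - 1 \<in> S"
  shows "gap_closed d (insert c S)"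
proof (cases "c \<in> S")
  case False
  show ?thesis unfolding gap_closed_def
  proof (intro ballI impI)
    fix x assume x: "x \<in> insert c S" and bigger: "\<exists>y\<in>insert c S. x < y"
    show "\<exists>y\<in>insert c S. x < y \<and> y \<le> x + d"
    proof (cases "x = c")
      case True
      show ?thesis
      proof (cases "Suc c \<in> S")
        case True
        then show ?thesis using \<open>x = c\<close> assms(2) by (intro bexI[of _ "Suc c"]) auto
      next
        case False
        then have "c - 1 \<in> S" using assms(3) by simp
        then have "c \<ge> 1" using \<open>c \<notin> S\<close> by (cases c) auto
        obtain z where "z \<in> S" "c < z" using bigger \<open>x = c\<close> by auto
        then have "\<exists>y\<in>S. c - 1 < y" by (intro bexI[of _ z]) auto
        then obtain w where "w \<in> S" "c - 1 < w" "w \<le> c - 1 + d"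
          using assms(1) \<open>c - 1 \<in> S\<close> unfolding gap_closed_def by blast
        moreover have "w \<noteq> c" using \<open>w \<in> S\<close> \<open>c \<notin> S\<close> by auto
        ultimately show ?thesis using \<open>x = c\<close> \<open>c \<ge> 1\<close> by (intro bexI[of _ w]) auto
      qed
    next
      case False
      then have "x \<in> S" using x by simp
      show ?thesis
      proof (cases "\<exists>y\<in>S. x < y")
        case True
        then show ?thesis using assms(1) \<open>x \<in> S\<close> unfolding gap_closed_def by blast
      next
        case no_bigger: False
        then have "x < c" using bigger \<open>x \<noteq> c\<close> by auto
        then have "c - 1 \<in> S" using assms(3) no_bigger by auto
        then have "c - 1 \<le> x" using no_bigger \<open>x < c\<close> by (metis not_le)
        then show ?thesis using \<open>x < c\<close> assms(2) by (intro bexI[of _ c]) auto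
      qed
    qed
  qed
qed (simp add: assms(1) insert_absorb)

lemma exists_adjacent_point:
  assumes "S \<noteq> {}" "S \<subseteq> {1..U}" "\<not> {1..U} \<subseteq> S"
  shows "\<exists>c\<in>{1..U}. c \<notin> S \<and> (Suc c \<in> S \<or> c - 1 \<in> S)"
proof (cases "1 \<in> S")
  case True
  define y where "y = Min ({1..U} - S)"
  have "{1..U} - S \<noteq> {}" using assms(3) by blast
  then have y: "y \<in> {1..U} - S" "\<And>z. z \<in> {1..U} - S \<Longrightarrow> y \<le> z"
    unfolding y_def using Min_in Min_le by (blast, simp)
  then have "y \<ge> 2" using True by (cases "y = 1") auto
  then have "y - 1 \<in> S" using y(1) y(2)[of "y - 1"] by fastforce
  then show ?thesis using y(1) by blast
next
  case False
  define a where "a = Min S"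
  have "finite S" using assms(2) finite_subset by blast
  then have a: "a \<in> S" "\<And>z. z \<in> S \<Longrightarrow> a \<le> z" using assms(1) by (simp_all add: a_def)
  then have "a \<ge> 2" using assms(2) False by (cases "a = 1") auto
  then have "a - 1 \<notin> S" using a(2)[of "a - 1"] by fastforce
  then show ?thesis using a(1) assms(2) \<open>a \<ge> 2\<close> by (intro bexI[of _ "a - 1"]) auto
qed

lemma gap_closed_extend:
  assumes "S \<noteq> {}" "S \<subseteq> {1..n}" "gap_closed d S" "d \<ge> 1" "card S \<le> k" "k \<le> n"
  shows "\<exists>T. S \<subseteq> T \<and> T \<subseteq> {1..n} \<and> gap_closed d T \<and> card T = k"
  using assms
proof (induction "k - card S" arbitrary: S)
  case 0
  then show ?case by (intro exI[of _ S]) simp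
next
  case (Suc j)
  have fin: "finite S" using Suc.prems(2) finite_subset by blast
  have "\<not> {1..n} \<subseteq> S" using Suc.hyps(2) Suc.prems(2,6) card_mono[OF fin] by force
  then obtain c where c: "c \<in> {1..n}" "c \<notin> S" "Suc c \<in> S \<or> c - 1 \<in> S"
    using exists_adjacent_point[OF Suc.prems(1,2)] by blast
  have "j = k - card (insert c S)" "card (insert c S) \<le> k"
    using Suc.hyps(2) c(2) fin by simp_all
  then obtain T where "insert c S \<subseteq> T" "T \<subseteq> {1..n}" "gap_closed d T" "card T = k"
    using Suc.hyps(1)[of "insert c S"] Suc.prems c gap_closed_insert_adjacent by blast
  then show ?case by blast
qed

lemma gap_closed_move_Max_down:
  assumes "d \<ge> 1" "finite B" "0 \<notin> B" "card B \<ge> 2" "gap_closed d B" "B \<noteq> {1..card B}"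
  shows "\<exists>c. c \<notin> B \<and> 1 \<le> c \<and> c < Max B \<and> gap_closed d (insert c (B - {Max B}))"
proof -
  define M where "M = Max B"
  define A where "A = B - {M}"
  have "B \<noteq> {}" using assms(4) by auto
  then have M: "M \<in> B" "\<And>x. x \<in> B \<Longrightarrow> x \<le> M" using assms(2) by (simp_all add: M_def)
  have "card A \<ge> 1" using M(1) assms(2,4) by (simp add: A_def)
  then have "A \<noteq> {}" by auto
  have A_sub: "A \<subseteq> {1..M - 1}"
  proof
    fix x assume "x \<in> A"
    then have "x \<in> B" "x \<noteq> M" by (simp_all add: A_def)
    moreover have "x \<noteq> 0" using \<open>x \<in> B\<close> assms(3) by metis
    ultimately have "0 < x" "x < M" using M(2)[of x] by auto
    then show "x \<in> {1..M - 1}" by simp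
  qed
  have "\<not> {1..M - 1} \<subseteq> A"
  proof
    assume "{1..M - 1} \<subseteq> A"
    then have "A = {1..M - 1}" using A_sub by blast
    moreover have "B = insert M A" using M(1) by (auto simp: A_def)
    moreover have "M \<noteq> 0" using M(1) assms(3) by metis
    moreover have "{1..M} = insert M {1..M - 1}" using \<open>M \<noteq> 0\<close> by (cases M) auto
    ultimately have "B = {1..M}" by simp
    then show False using assms(6) by simp
  qed
  then obtain c where c: "c \<in> {1..M - 1}" "c \<notin> A" "Suc c \<in> A \<or> c - 1 \<in> A"
    using exists_adjacent_point[OF \<open>A \<noteq> {}\<close> A_sub] by blast
  have "gap_closed d A" unfolding A_def M_def using assms(2,5) by (rule gap_closed_Diff_Max)
  then have "gap_closed d (insert c A)" using assms(1) c(3) by (rule gap_closed_insert_adjacent)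
  moreover have "c \<notin> B" using c(1,2) by (auto simp: A_def)
  ultimately show ?thesis using c(1) unfolding A_def M_def by auto
qed

lemma card_pm1:
  assumes "finite A" "\<forall>a\<in>A. f a \<in> {-1, 1 :: int}"
  shows "card A = card {a\<in>A. f a = 1} + card {a\<in>A. f a = -1}"
proof -
  have "A = {a\<in>A. f a = 1} \<union> {a\<in>A. f a = -1}" using assms(2) by auto
  moreover have "card ({a\<in>A. f a = 1} \<union> {a\<in>A. f a = -1}) = card {a\<in>A. f a = 1} + card {a\<in>A. f a = -1}"
    using assms(1) by (intro card_Un_disjoint) auto
  ultimately show ?thesis by simp
qed

lemma sum_pm1:
  assumes "finite A" "\<forall>a\<in>A. f a \<in> {-1, 1 :: int}"
  shows "(\<Sum>a\<in>A. f a) = int (card {a\<in>A. f a = 1}) - int (card {a\<in>A. f a = -1})"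
proof -
  have "(\<Sum>a\<in>A. f a) = (\<Sum>a\<in>A. of_bool (f a = 1) - of_bool (f a = -1))"
    using assms(2) by (intro sum.cong) auto
  then show ?thesis using assms(1) by (simp add: sum_subtractf Int_def)
qed

lemma even_sum_pm1:
  assumes "finite A" "\<forall>a\<in>A. f a \<in> {-1, 1 :: int}" "even (card A)"
  shows "even (\<Sum>a\<in>A. f a)"
  using sum_pm1[OF assms(1,2)] card_pm1[OF assms(1,2)] assms(3) by presburger

lemma sum_pm1_sign:
  assumes "finite A" "\<forall>a\<in>A. f a \<in> {-1, 1 :: int}" "v \<in> {-1, 1}"
    and "card A \<le> 2 * card {a\<in>A. f a = v}"
  shows "0 \<le> v * (\<Sum>a\<in>A. f a)"
  using sum_pm1[OF assms(1,2)] card_pm1[OF assms(1,2)] assms(3,4) by auto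

lemma exists_zero_sum_gap_closed:
  fixes f :: "nat \<Rightarrow> int"
  assumes "d \<ge> 1" "k \<ge> 2" "even k" "\<forall>i\<in>{1..n}. f i \<in> {-1, 1}"
  shows "B \<subseteq> {1..n} \<Longrightarrow> card B = k \<Longrightarrow> gap_closed d B
    \<Longrightarrow> (\<Sum>a\<in>B. f a) * (\<Sum>a\<in>{1..k}. f a) \<le> 0
    \<Longrightarrow> \<exists>A\<subseteq>{1..n}. card A = k \<and> gap_closed d A \<and> (\<Sum>a\<in>A. f a) = 0"
proof (induction "\<Sum>B" arbitrary: B rule: less_induct)
  case less
  have fin: "finite B" using less.prems(1) finite_subset by blast
  show ?case
  proof (cases "(\<Sum>a\<in>B. f a) = 0 \<or> B = {1..k}")
    case True
    then have "(\<Sum>a\<in>B. f a) = 0" using less.prems(4) by (auto simp: mult_le_0_iff)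
    then show ?thesis using less.prems by blast
  next
    case False
    define M where "M = Max B"
    have "0 \<notin> B" using less.prems(1) by auto
    then obtain c where c: "c \<notin> B" "1 \<le> c" "c < M" "gap_closed d (insert c (B - {M}))"
      using gap_closed_move_Max_down[OF assms(1) fin] less.prems(2,3) assms(2) False
      unfolding M_def by auto
    define B' where "B' = insert c (B - {M})"
    have "B \<noteq> {}" using less.prems(2) assms(2) by auto
    then have "M \<in> B" using fin by (simp add: M_def)
    then have "M \<le> n" using less.prems(1) by auto
    have B'_sub: "B' \<subseteq> {1..n}" using less.prems(1) c(2,3) \<open>M \<le> n\<close> by (auto simp: B'_def)
    have card_B': "card B' = k" using less.prems(2) c(1) \<open>M \<in> B\<close> fin assms(2) by (simp add: B'_def)
    have "\<Sum>B' < \<Sum>B"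
      using c(1,3) \<open>M \<in> B\<close> fin by (simp add: B'_def sum.remove[of B M])
    have sum_B: "(\<Sum>a\<in>B. f a) = f M + (\<Sum>a\<in>B - {M}. f a)"
      using \<open>M \<in> B\<close> fin by (simp add: sum.remove)
    have sum_B': "(\<Sum>a\<in>B'. f a) = f c + (\<Sum>a\<in>B - {M}. f a)"
      using c(1) fin by (simp add: B'_def)
    have "f M \<in> {-1, 1}" "f c \<in> {-1, 1}" using assms(4) \<open>M \<le> n\<close> \<open>M \<in> B\<close> less.prems(1) c(2,3) by auto
    then have step: "\<bar>(\<Sum>a\<in>B'. f a) - (\<Sum>a\<in>B. f a)\<bar> \<le> 2" using sum_B sum_B' by auto
    have "even (\<Sum>a\<in>B. f a)"
      using even_sum_pm1[OF fin] assms(3,4) less.prems(1,2) by (meson subsetD)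
    moreover have "(\<Sum>a\<in>B. f a) \<noteq> 0" using False by simp
    ultimately have "(\<Sum>a\<in>B. f a) \<le> -2 \<or> 2 \<le> (\<Sum>a\<in>B. f a)" by presburger
    then have "(\<Sum>a\<in>B'. f a) * (\<Sum>a\<in>{1..k}. f a) \<le> 0"
      using step less.prems(4) by (auto simp: mult_le_0_iff)
    then show ?thesis
      using less.hyps[OF \<open>\<Sum>B' < \<Sum>B\<close> B'_sub card_B'] c(4) unfolding B'_def by blast
  qed
qed

definition bridge :: "nat \<Rightarrow> nat \<Rightarrow> nat \<Rightarrow> nat set" where
  "bridge d a b = (\<lambda>l. a + d * l) ` {..(b - a - 1) div d}"

lemma card_bridge_le: "card (bridge d a b) \<le> Suc ((b - a - 1) div d)"
  unfolding bridge_def using card_image_le[of "{..(b - a - 1) div d}" "\<lambda>l. a + d * l"] by simp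

lemma left_mem_bridge: "a \<in> bridge d a b"
  unfolding bridge_def by force

lemma bridge_subset:
  assumes "a < b" shows "bridge d a b \<subseteq> {a..<b}"
proof
  fix x assume "x \<in> bridge d a b"
  then obtain l where l: "l \<le> (b - a - 1) div d" "x = a + d * l" unfolding bridge_def by blast
  have "d * l \<le> d * ((b - a - 1) div d)" using l(1) by simp
  also have "\<dots> \<le> b - a - 1" by (rule times_div_less_eq_dividend)
  finally show "x \<in> {a..<b}" using l(2) assms by simp
qed

lemma gap_closed_insert_bridge:
  assumes "d \<ge> 1" "a < b"
  shows "gap_closed d (insert b (bridge d a b))"
  unfolding gap_closed_def
proof (intro ballI impI)
  fix x assume x: "x \<in> insert b (bridge d a b)" and "\<exists>y\<in>insert b (bridge d a b). x < y"
  then have "x \<noteq> b" using bridge_subset[OF assms(2)] by fastforce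
  with x obtain l where l: "l \<le> (b - a - 1) div d" "x = a + d * l" unfolding bridge_def by blast
  show "\<exists>y\<in>insert b (bridge d a b). x < y \<and> y \<le> x + d"
  proof (cases "l = (b - a - 1) div d")
    case True
    have "x \<in> bridge d a b" using l unfolding bridge_def by blast
    then have "x < b" using bridge_subset[OF assms(2), of d] by auto
    have "(b - a - 1) mod d < d" using assms(1) by simp
    then have "b - a - 1 < d * ((b - a - 1) div d) + d"
      using mult_div_mod_eq[of d "b - a - 1"] by linarith
    then have "b \<le> x + d" unfolding l(2) True using assms(2) by linarith
    then show ?thesis using \<open>x < b\<close> by blast
  next
    case False
    then have "a + d * Suc l \<in> bridge d a b"
      using l(1) unfolding bridge_def by (intro image_eqI[of _ _ "Suc l"]) auto
    then show ?thesis using l(2) assms(1) by (intro bexI[of _ "a + d * Suc l"]) auto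
  qed
qed

definition chain :: "nat \<Rightarrow> (nat \<Rightarrow> nat) \<Rightarrow> nat \<Rightarrow> nat set" where
  "chain d p l = insert (p l) (\<Union>i<l. bridge d (p i) (p (Suc i)))"

lemma chain_0 [simp]: "chain d p 0 = {p 0}"
  by (simp add: chain_def)

lemma chain_Suc:
  "chain d p (Suc l) = chain d p l \<union> insert (p (Suc l)) (bridge d (p l) (p (Suc l)))"
  using left_mem_bridge[of "p l" d "p (Suc l)"] by (auto simp: chain_def lessThan_Suc)

lemma mem_chain: "i \<le> l \<Longrightarrow> p i \<in> chain d p l"
  by (induction l) (auto simp: chain_Suc le_Suc_eq)

lemma chain_subset:
  assumes "\<forall>i<l. p i < p (Suc i)"
  shows "chain d p l \<subseteq> {p 0..p l}"
  using assms
proof (induction l)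
  case (Suc l)
  have IH: "chain d p l \<subseteq> {p 0..p l}" and lt: "p l < p (Suc l)" using Suc by simp_all
  have "bridge d (p l) (p (Suc l)) \<subseteq> {p l..<p (Suc l)}" using lt by (rule bridge_subset)
  moreover have "p 0 \<le> p l" using IH mem_chain[of l l p d] by auto
  ultimately show ?case using IH lt unfolding chain_Suc by force
qed simp

lemma gap_closed_chain:
  assumes "d \<ge> 1" "\<forall>i<l. p i < p (Suc i)"
  shows "gap_closed d (chain d p l)"
  using assms(2)
proof (induction l)
  case 0 then show ?case by (simp add: gap_closed_def)
next
  case (Suc l)
  have lt: "p l < p (Suc l)" using Suc.prems by simp
  show ?case unfolding chain_Suc
  proof (rule gap_closed_Un)
    show "gap_closed d (chain d p l)" using Suc by simp
    show "gap_closed d (insert (p (Suc l)) (bridge d (p l) (p (Suc l))))"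
      using gap_closed_insert_bridge[OF assms(1) lt] .
    show "p l \<in> chain d p l" by (rule mem_chain) simp
    show "p l \<in> insert (p (Suc l)) (bridge d (p l) (p (Suc l)))" by (simp add: left_mem_bridge)
    show "\<forall>x\<in>chain d p l. x \<le> p l" using chain_subset[of l p d] Suc.prems by auto
    show "\<forall>y\<in>insert (p (Suc l)) (bridge d (p l) (p (Suc l))). p l \<le> y"
      using bridge_subset[OF lt, of d] lt by auto
  qed
qed

lemma card_chain_le:
  "card (chain d p l) \<le> Suc l + (\<Sum>i<l. (p (Suc i) - p i - 1) div d)"
proof -
  have "card (chain d p l) \<le> Suc (card (\<Union>i<l. bridge d (p i) (p (Suc i))))"
    unfolding chain_def by (rule card_insert_le_m1) simp_all
  also have "card (\<Union>i<l. bridge d (p i) (p (Suc i))) \<le> (\<Sum>i<l. card (bridge d (p i) (p (Suc i))))"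
    by (rule card_UN_le) simp
  also have "\<dots> \<le> (\<Sum>i<l. Suc ((p (Suc i) - p i - 1) div d))"
    by (intro sum_mono card_bridge_le)
  finally show ?thesis by (simp add: sum_Suc)
qed

lemma card_chain_points_ge:
  assumes "\<forall>i<l. p i < p (Suc i)" "\<forall>i\<le>l. Q (p i)"
  shows "Suc l \<le> card {x\<in>chain d p l. Q x}"
proof -
  have less: "p i < p i'" if "i < i'" "i' \<le> l" for i i'
    using that assms(1) by (induction i') (auto simp: less_Suc_eq intro: less_trans)
  have "inj_on p {..l}"
    by (rule inj_onI) (metis atMost_iff less less_irrefl linorder_neqE_nat)
  then have "card (p ` {..l}) = Suc l" by (simp add: card_image)
  moreover have "p ` {..l} \<subseteq> {x\<in>chain d p l. Q x}" using assms(2) by (auto intro: mem_chain)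
  moreover have "finite (chain d p l)" by (simp add: chain_def bridge_def)
  ultimately show ?thesis by (metis (no_types, lifting) card_mono finite_subset mem_Collect_eq subsetI)
qed

lemma gaps_fill_sum_le:
  assumes "\<forall>i<l. p i < p (Suc i)"
  shows "p 0 + l + d * (\<Sum>i<l. (p (Suc i) - p i - 1) div d) \<le> p l"
  using assms
proof (induction l)
  case (Suc l)
  have "p 0 + l + d * (\<Sum>i<l. (p (Suc i) - p i - 1) div d) \<le> p l" "p l < p (Suc l)"
    using Suc by simp_all
  moreover have "d * ((p (Suc l) - p l - 1) div d) \<le> p (Suc l) - p l - 1"
    by (rule times_div_less_eq_dividend)
  ultimately show ?case by (simp add: distrib_left del: times_div_less_eq_dividend)
qed simp

lemma sum_ge_by_windows:
  fixes t :: "nat \<Rightarrow> nat"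
  assumes "\<And>j. j + w \<le> N \<Longrightarrow> b \<le> (\<Sum>i\<in>{j..<j + w}. t i)"
  shows "N div w * b \<le> (\<Sum>i<N. t i)"
proof -
  have "N div w * b = (\<Sum>i<N div w. b)" by simp
  also have "\<dots> \<le> (\<Sum>i<N div w. \<Sum>l\<in>{i * w..<i * w + w}. t l)"
  proof (rule sum_mono, rule assms)
    fix i assume "i \<in> {..<N div w}"
    then have "Suc i * w \<le> N div w * w" by (intro mult_le_mono1) simp
    also have "\<dots> \<le> N" by simp
    finally show "i * w + w \<le> N" by simp
  qed
  also have "\<dots> = (\<Sum>l<N div w * w. t l)" by (rule sum.nat_group)
  also have "\<dots> \<le> (\<Sum>l<N. t l)" by (intro sum_mono2) (auto intro: less_le_trans)
  finally show ?thesis .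
qed

lemma exists_sparse_window:
  fixes p :: "nat \<Rightarrow> nat"
  assumes "d \<ge> 1" "m \<ge> 2" "\<forall>i. Suc i < c \<longrightarrow> p i < p (Suc i)"
    and "1 \<le> p 0" "p (c - 1) \<le> n" "n \<le> (d + 1) * c"
    and "(d + 1) * (m - 1) * ((m + 1) div 2) < n"
  shows "\<exists>j. j + m \<le> c \<and> (\<Sum>i\<in>{j..<j + (m - 1)}. (p (Suc i) - p i - 1) div d) \<le> m"
proof (rule ccontr)
  \<comment> \<open>If each of the q disjoint windows of m - 1 consecutive gaps needs more than m filler
    points, then c + d q (m + 1) \<le> n \<le> (d + 1) c; this bounds q, and then c and n.\<close>
  define t where "t i = (p (Suc i) - p i - 1) div d" for i
  define w where "w = m - 1"
  define q where "q = (c - 1) div w"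
  define r where "r = (c - 1) mod w"
  assume "\<not> ?thesis"
  then have dense: "m + 1 \<le> (\<Sum>i\<in>{j..<j + w}. t i)" if "j + m \<le> c" for j
    using that unfolding t_def w_def by fastforce
  have c1: "c \<ge> 1" using assms(6,7) by (cases c) auto
  have w1: "w \<ge> 1" using assms(2) by (simp add: w_def)
  have "q * (m + 1) \<le> (\<Sum>l<c - 1. t l)"
    unfolding q_def using dense w1 by (intro sum_ge_by_windows) (simp add: w_def)
  then have "d * (q * (m + 1)) \<le> d * (\<Sum>l<c - 1. t l)" by simp
  moreover have "p 0 + (c - 1) + d * (\<Sum>l<c - 1. t l) \<le> p (c - 1)"
    unfolding t_def using assms(3) by (intro gaps_fill_sum_le) simp
  ultimately have "c + d * (q * (m + 1)) \<le> (d + 1) * c"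
    using assms(4,5,6) c1 by linarith
  then have "d * (q * (m + 1)) \<le> d * c" by (simp add: algebra_simps)
  then have "q * (m + 1) \<le> c" using assms(1) by simp
  moreover have c_split: "c = q * w + r + 1" using c1 unfolding q_def r_def by simp
  moreover have "r < w" using w1 by (simp add: r_def)
  moreover have "m = w + 1" using assms(2) by (simp add: w_def)
  then have "q * (m + 1) = q * w + 2 * q" by (simp add: algebra_simps)
  ultimately have "2 * q \<le> w" by linarith
  then have "q + 1 \<le> (m + 1) div 2" using assms(2) unfolding w_def by presburger
  have "n \<le> (d + 1) * c" by (fact assms(6))
  also have "c \<le> w * (q + 1)" using c_split \<open>r < w\<close> by (simp add: algebra_simps)
  then have "(d + 1) * c \<le> (d + 1) * w * (q + 1)" unfolding mult.assoc by (rule mult_le_mono2)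
  also have "\<dots> \<le> (d + 1) * (m - 1) * ((m + 1) div 2)"
    using \<open>q + 1 \<le> (m + 1) div 2\<close> unfolding w_def by (rule mult_le_mono2)
  finally show False using assms(7) by simp
qed

lemma exists_rich_gap_closed_set:
  fixes Q :: "nat \<Rightarrow> bool"
  assumes "d \<ge> 1" "m \<ge> 2" "n \<le> (d + 1) * card {i\<in>{1..n}. Q i}"
    and "(d + 1) * (m - 1) * ((m + 1) div 2) < n"
  shows "\<exists>S\<subseteq>{1..n}. gap_closed d S \<and> card S \<le> 2 * m \<and> m \<le> card {x\<in>S. Q x}"
proof -
  define N where "N = {i\<in>{1..n}. Q i}"
  obtain ps where ps: "sorted_wrt (<) ps" "set ps = N" "length ps = card N"
    using finite_set_strict_sorted[of N] by (auto simp: N_def)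
  define p where "p i = ps ! i" for i
  have mono: "\<forall>i. Suc i < card N \<longrightarrow> p i < p (Suc i)"
    using ps by (auto simp: p_def sorted_wrt_iff_nth_less)
  have p_in: "p i \<in> N" if "i < card N" for i
    using nth_mem[of i ps] that ps(2,3) unfolding p_def by simp
  have cnt: "n \<le> (d + 1) * card N" using assms(3) by (simp add: N_def)
  then have "card N \<ge> 1" using assms(4) by (cases "card N") auto
  then have "1 \<le> p 0" "p (card N - 1) \<le> n" using p_in[of 0] p_in[of "card N - 1"] by (auto simp: N_def)
  then obtain j where j: "j + m \<le> card N"
      and sparse: "(\<Sum>i\<in>{j..<j + (m - 1)}. (p (Suc i) - p i - 1) div d) \<le> m"
    using exists_sparse_window[OF assms(1,2) mono _ _ cnt assms(4)] by blast
  define S where "S = chain d (\<lambda>i. p (j + i)) (m - 1)"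
  have shifted_mono: "\<forall>i<m - 1. p (j + i) < p (j + Suc i)" using mono j by simp
  have "S \<subseteq> {p j..p (j + (m - 1))}"
    using chain_subset[OF shifted_mono] unfolding S_def by simp
  moreover have "p j \<in> N" "p (j + (m - 1)) \<in> N" using j assms(2) by (auto intro: p_in)
  ultimately have S_sub: "S \<subseteq> {1..n}" unfolding N_def by force
  have "gap_closed d S" unfolding S_def using assms(1) shifted_mono by (rule gap_closed_chain)
  have "card S \<le> Suc (m - 1) + (\<Sum>i<m - 1. (p (j + Suc i) - p (j + i) - 1) div d)"
    unfolding S_def by (rule card_chain_le)
  also have "\<dots> = m + (\<Sum>i\<in>{j..<j + (m - 1)}. (p (Suc i) - p i - 1) div d)"
    using assms(2) sum.shift_bounds_nat_ivl[of "\<lambda>i. (p (Suc i) - p i - 1) div d" 0 j "m - 1"]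
    by (simp add: lessThan_atLeast0 add.commute)
  finally have "card S \<le> 2 * m" using sparse by linarith
  have "\<forall>i\<le>m - 1. Q (p (j + i))" using p_in j assms(2) by (simp add: N_def)
  then have "m \<le> card {x\<in>S. Q x}"
    using card_chain_points_ge[OF shifted_mono] assms(2) unfolding S_def by fastforce
  then show ?thesis using S_sub \<open>gap_closed d S\<close> \<open>card S \<le> 2 * m\<close> by blast
qed

lemma exists_signed_gap_closed_block:
  fixes f :: "nat \<Rightarrow> int"
  assumes "d \<ge> 1" "m \<ge> 2" "2 * m \<le> n" "\<forall>i\<in>{1..n}. f i \<in> {-1, 1}" "v \<in> {-1, 1}"
    and "n \<le> (d + 1) * card {i\<in>{1..n}. f i = v}"
    and "(d + 1) * (m - 1) * ((m + 1) div 2) < n"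
  shows "\<exists>B\<subseteq>{1..n}. card B = 2 * m \<and> gap_closed d B \<and> 0 \<le> v * (\<Sum>a\<in>B. f a)"
proof -
  obtain S where S: "S \<subseteq> {1..n}" "gap_closed d S" "card S \<le> 2 * m" "m \<le> card {x\<in>S. f x = v}"
    using exists_rich_gap_closed_set[OF assms(1,2,6,7)] by blast
  have "finite S" using S(1) finite_subset by blast
  then have "S \<noteq> {}" using S(4) assms(2) by (intro notI) simp
  then obtain B where B: "S \<subseteq> B" "B \<subseteq> {1..n}" "gap_closed d B" "card B = 2 * m"
    using gap_closed_extend[OF _ S(1,2) assms(1) S(3) assms(3)] by blast
  have "finite B" using B(2) finite_subset by blast
  then have "card {x\<in>S. f x = v} \<le> card {a\<in>B. f a = v}" using B(1) by (intro card_mono) auto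
  then have "card B \<le> 2 * card {a\<in>B. f a = v}" using S(4) B(4) by simp
  then have "0 \<le> v * (\<Sum>a\<in>B. f a)"
    using sum_pm1_sign[OF \<open>finite B\<close> _ assms(5)] assms(4) B(2) by blast
  then show ?thesis using B by blast
qed

theorem exists_zero_sum_dk_block:
  fixes f :: "nat \<Rightarrow> int"
  assumes "d \<ge> 2" "m \<ge> 2" "\<forall>i\<in>{1..n}. f i \<in> {-1, 1}"
    and "n \<le> (d + 1) * card {i\<in>{1..n}. f i = 1}" "n \<le> (d + 1) * card {i\<in>{1..n}. f i = -1}"
    and "(d + 1) * (m - 1) * ((m + 1) div 2) < n"
  shows "\<exists>A\<subseteq>{1..n}. dk_block d (2 * m) A \<and> (\<Sum>a\<in>A. f a) = 0"
proof -
  have "3 * (m - 1) * 1 \<le> (d + 1) * (m - 1) * ((m + 1) div 2)"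
    using assms(1,2) by (intro mult_le_mono) auto
  then have "2 * m \<le> n" using assms(2,6) by linarith
  define v :: int where "v = (if 0 \<le> (\<Sum>a\<in>{1..2 * m}. f a) then -1 else 1)"
  have "v \<in> {-1, 1}" "n \<le> (d + 1) * card {i\<in>{1..n}. f i = v}"
    using assms(4,5) by (simp_all add: v_def)
  moreover have "d \<ge> 1" using assms(1) by simp
  ultimately obtain B where B: "B \<subseteq> {1..n}" "card B = 2 * m" "gap_closed d B" "0 \<le> v * (\<Sum>a\<in>B. f a)"
    using exists_signed_gap_closed_block[OF _ assms(2) \<open>2 * m \<le> n\<close> assms(3) _ _ assms(6)] by blast
  then have "(\<Sum>a\<in>B. f a) * (\<Sum>a\<in>{1..2 * m}. f a) \<le> 0"
    by (auto simp: v_def mult_le_0_iff split: if_splits)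
  then obtain A where "A \<subseteq> {1..n}" "card A = 2 * m" "gap_closed d A" "(\<Sum>a\<in>A. f a) = 0"
    using exists_zero_sum_gap_closed[OF \<open>d \<ge> 1\<close> _ _ assms(3) B(1-3)] assms(2) by auto
  moreover have "finite A" using \<open>A \<subseteq> {1..n}\<close> finite_subset by blast
  ultimately show ?thesis using gap_closed_imp_dk_block by metis
qed

lemma count_bound_of_discrepancy:
  fixes P N D :: real
  assumes "D \<ge> 0" "\<bar>P - N\<bar> \<le> (D - 1) / (D + 1) * (P + N)"
  shows "P + N \<le> (D + 1) * N"
proof -
  have "(D + 1) * (P - N) \<le> (D + 1) * \<bar>P - N\<bar>" using assms(1) by (intro mult_left_mono) auto
  also have "\<dots> \<le> (D - 1) * (P + N)" using assms by (simp add: field_simps)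
  finally show ?thesis by (simp add: algebra_simps)
qed

lemma card_pm1_ge_of_discrepancy:
  fixes f :: "nat \<Rightarrow> int"
  assumes "finite A" "\<forall>a\<in>A. f a \<in> {-1, 1}"
    and "\<bar>real_of_int (\<Sum>a\<in>A. f a)\<bar> \<le> (real d - 1) / (real d + 1) * real (card A)"
  shows "card A \<le> (d + 1) * card {a\<in>A. f a = 1}" "card A \<le> (d + 1) * card {a\<in>A. f a = -1}"
proof -
  define P where "P = card {a\<in>A. f a = 1}"
  define N where "N = card {a\<in>A. f a = -1}"
  have "(\<Sum>a\<in>A. f a) = int P - int N" "card A = P + N"
    using sum_pm1[OF assms(1,2)] card_pm1[OF assms(1,2)] by (simp_all add: P_def N_def)
  then have disc: "\<bar>real P - real N\<bar> \<le> (real d - 1) / (real d + 1) * (real P + real N)"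
    using assms(3) by simp
  then have "\<bar>real N - real P\<bar> \<le> (real d - 1) / (real d + 1) * (real N + real P)"
    by (simp only: abs_minus_commute add.commute)
  then have "real N + real P \<le> (real d + 1) * real P"
    by (rule count_bound_of_discrepancy[rotated]) simp
  moreover have "real P + real N \<le> (real d + 1) * real N"
    using disc by (rule count_bound_of_discrepancy[rotated]) simp
  ultimately have "real (card A) \<le> real ((d + 1) * P)" "real (card A) \<le> real ((d + 1) * N)"
    using \<open>card A = P + N\<close> by (simp_all add: algebra_simps)
  then show "card A \<le> (d + 1) * P" "card A \<le> (d + 1) * N" by (simp_all only: of_nat_le_iff)
qed

lemma length_bound_of_real_bound:
  assumes "s \<in> {0, 1}" "s mod 2 = (m - 1) mod 2" "m \<ge> 1"
    and "real n \<ge> (real d + 1) / 8 * (real (2 * m) ^ 2 - 2 * real s * real (2 * m) + 4 * real s - 4) + 1"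
  shows "(d + 1) * (m - 1) * ((m + 1) div 2) < n"
proof -
  define X where "X = (m - 1) * ((m + 1) div 2)"
  have E: "real (2 * m) ^ 2 - 2 * real s * real (2 * m) + 4 * real s - 4 = 8 * real X"
  proof (cases "even m")
    case True
    then obtain h where "m = 2 * h" by blast
    moreover have "s = 1" using assms(1-3) True by auto
    ultimately show ?thesis using assms(3) by (simp add: X_def power2_eq_square algebra_simps of_nat_diff)
  next
    case False
    then obtain h where "m = 2 * h + 1" using oddE by blast
    moreover have "s = 0" using assms(1,2) False by auto
    ultimately show ?thesis by (simp add: X_def power2_eq_square algebra_simps)
  qed
  have "(real d + 1) / 8 * (8 * real X) = real ((d + 1) * X)" by (simp add: algebra_simps)
  then have "real ((d + 1) * X) < real n" using assms(4) unfolding E by linarith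
  then show ?thesis unfolding X_def of_nat_less_iff by (simp only: mult.assoc)
qed

theorem theorem3p2:
  fixes k d n s :: nat and f :: "nat \<Rightarrow> int"
  assumes "k \<ge> 6" and "even k" and "d \<ge> 2" and "n \<ge> 1"
    and "s \<in> {0, 1}" and "s mod 2 = ((k - 2) div 2) mod 2"
    and "real n \<ge> (real d + 1) / 8 *
           (real k ^ 2 - 2 * real s * real k + 4 * real s - 4) + 1"
    and "\<forall>i\<in>{1..n}. f i \<in> {-1, 1}"
    and "\<bar>real_of_int (\<Sum>i\<in>{1..n}. f i)\<bar> \<le> (real d - 1) / (real d + 1) * real n"
  shows "\<exists>A. A \<subseteq> {1..n} \<and> dk_block d k A \<and> (\<Sum>a\<in>A. f a) = 0"
proof -
  obtain m where k: "k = 2 * m" using assms(2) by blast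
  then have "m \<ge> 2" "(k - 2) div 2 = m - 1" using assms(1) by auto
  then have "(d + 1) * (m - 1) * ((m + 1) div 2) < n"
    using length_bound_of_real_bound[where s = s and m = m and n = n and d = d] assms(5,6,7) k by simp
  moreover have "n \<le> (d + 1) * card {i\<in>{1..n}. f i = 1}" "n \<le> (d + 1) * card {i\<in>{1..n}. f i = -1}"
    using card_pm1_ge_of_discrepancy[OF _ assms(8), of d] assms(9) by simp_all
  ultimately show ?thesis
    using exists_zero_sum_dk_block[OF assms(3) \<open>m \<ge> 2\<close> assms(8)] k by blast
qed

end
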